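(* Let $B\in\mathbb R^{n\times m}$, let $\mathcal I_{\mathcal V}$ be a symmetric positive definite $m\times m$ matrix, and let $f:\mathbb R^m\to\mathbb R$ be differentiable with $f\in\mathcal S^{1,1}_{\mu_{f,\mathcal I_{\mathcal V}},L_{f,\mathcal I_{\mathcal V}}}$ with respect to $\mathcal I_{\mathcal V}$. For $u_1,u_2\in\mathbb R^m$ and $p_1,p_2\in\mathbb R^n$ set $v_i=u_i+\mathcal I_{\mathcal V}^{-1}B^\top p_i$. Then $$\big(\nabla f(u_1)-\nabla f(u_2),\ \mathcal I_{\mathcal V}^{-1}B^\top(p_1-p_2)\big)\ \ge\ \frac{\mu_{f,\mathcal I_{\mathcal V}}}{2}\|v_1-v_2\|^2_{\mathcal I_{\mathcal V}}-\frac{L_{f,\mathcal I_{\mathcal V}}}{2}\|B^\top(p_1-p_2)\|^2_{\mathcal I_{\mathcal V}^{-1}}-\frac12\big(\nabla f(u_1)-\nabla f(u_2),u_1-u_2\big).$$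
   Context: For a symmetric positive definite matrix $M$, $\|x\|_M=(Mx,x)^{1/2}$. The Bregman divergence is $D_f(y,x)=f(y)-f(x)-(\nabla f(x),y-x)$, and $f\in\mathcal S^{1,1}_{\mu_{f,M},L_{f,M}}$ with respect to $M$ means $\frac{\mu_{f,M}}{2}\|x-y\|_M^2\le D_f(y,x)\le\frac{L_{f,M}}{2}\|x-y\|_M^2$ for all $x,y$ (with $\mu_{f,M}\ge0$). *)

theory Defs
  imports "HOL-Analysis.Analysis"
begin

definition spd :: "real^'m^'m \<Rightarrow> bool" where
  "spd M \<longleftrightarrow> transpose M = M \<and> (\<forall>x. x \<noteq> 0 \<longrightarrow> (M *v x) \<bullet> x > 0)"

definition normM :: "real^'m^'m \<Rightarrow> real^'m \<Rightarrow> real" where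
  "normM M x = sqrt ((M *v x) \<bullet> x)"

definition bregman :: "(real^'m \<Rightarrow> real) \<Rightarrow> (real^'m \<Rightarrow> real^'m) \<Rightarrow> real^'m \<Rightarrow> real^'m \<Rightarrow> real" where
  "bregman f g y x = f y - f x - g x \<bullet> (y - x)"

definition S11 :: "real^'m^'m \<Rightarrow> real \<Rightarrow> real \<Rightarrow> (real^'m \<Rightarrow> real) \<Rightarrow> (real^'m \<Rightarrow> real^'m) \<Rightarrow> bool" where
  "S11 M \<mu> L f g \<longleftrightarrow> \<mu> \<ge> 0 \<and>
     (\<forall>x. (f has_derivative (\<lambda>h. g x \<bullet> h)) (at x)) \<and>
     (\<forall>x y. \<mu> / 2 * (normM M (x - y))\<^sup>2 \<le> bregman f g y x \<and>
            bregman f g y x \<le> L / 2 * (normM M (x - y))\<^sup>2)"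

end

theory Submission
  imports Defs
begin

text \<open>Write \<open>w = IV\<inverse> B\<^sup>T (p\<^sub>1 - p\<^sub>2)\<close>, so that \<open>v\<^sub>1 - v\<^sub>2 = (u\<^sub>1 - u\<^sub>2) + w\<close> and
  \<open>\<parallel>B\<^sup>T (p\<^sub>1 - p\<^sub>2)\<parallel>\<^bsub>IV\<inverse>\<^esub> = \<parallel>w\<parallel>\<^bsub>IV\<^esub>\<close>. By the three-point identity of the Bregman divergence,
  \<open>(\<nabla>f(y) - \<nabla>f(x), w) = D(y + w, x) - D(y + w, y) - D(y, x)\<close>; bounding the first divergence
  below by \<open>\<mu>\<close> and the second above by \<open>L\<close> gives a lower bound for \<open>(\<nabla>f(u\<^sub>1) - \<nabla>f(u\<^sub>2), w)\<close>
  once with \<open>(x, y) = (u\<^sub>2, u\<^sub>1)\<close> and once, with \<open>-w\<close>, with \<open>(x, y) = (u\<^sub>1, u\<^sub>2)\<close>. Averaging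
  the two bounds replaces \<open>D(u\<^sub>1, u\<^sub>2) + D(u\<^sub>2, u\<^sub>1)\<close> by \<open>(\<nabla>f(u\<^sub>1) - \<nabla>f(u\<^sub>2), u\<^sub>1 - u\<^sub>2)\<close>.\<close>

lemma matrix_inv_right:
  fixes M :: "'a::field^'n^'n"
  assumes "invertible M"
  shows "M ** matrix_inv M = mat 1"
proof -
  have "\<exists>M'. M ** M' = mat 1 \<and> M' ** M = mat 1"
    using assms unfolding invertible_def .
  then have "M ** matrix_inv M = mat 1 \<and> matrix_inv M ** M = mat 1"
    unfolding matrix_inv_def by (rule someI_ex)
  then show ?thesis
    by blast
qed

lemma spd_invertible:
  assumes "spd M"
  shows "invertible M"
proof -
  have "\<forall>x. M *v x = 0 \<longrightarrow> x = 0"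
    using assms unfolding spd_def by (metis inner_zero_left less_irrefl)
  then show ?thesis
    using matrix_left_invertible_ker invertible_left_inverse by blast
qed

lemma normM_uminus: "normM M (- x) = normM M x"
proof -
  have "M *v (- x) = - (M *v x)"
    using matrix_vector_mult_diff_distrib[of M 0 x] by simp
  then show ?thesis
    unfolding normM_def by simp
qed

lemma normM_matrix_inv:
  assumes "invertible M"
  shows "normM (matrix_inv M) y = normM M (matrix_inv M *v y)"
proof -
  have "M *v (matrix_inv M *v y) = y"
    using assms by (simp add: matrix_vector_mul_assoc matrix_inv_right)
  then show ?thesis
    unfolding normM_def by (metis inner_commute)
qed

lemma bregman_three_point:
  "bregman f g z x - bregman f g z y - bregman f g y x = (g y - g x) \<bullet> (z - y)"
  unfolding bregman_def by (simp add: algebra_simps)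

lemma bregman_symmetrized:
  "bregman f g x y + bregman f g y x = (g x - g y) \<bullet> (x - y)"
  unfolding bregman_def by (simp add: algebra_simps)

lemma S11_gradient_inner_lower_bound:
  assumes "S11 M \<mu> L f g"
  shows "(g y - g x) \<bullet> w
    \<ge> \<mu> / 2 * (normM M (y - x + w))\<^sup>2 - L / 2 * (normM M w)\<^sup>2 - bregman f g y x"
proof -
  have "\<mu> / 2 * (normM M (x - (y + w)))\<^sup>2 \<le> bregman f g (y + w) x"
    using assms unfolding S11_def by blast
  moreover have "x - (y + w) = - (y - x + w)"
    by simp
  ultimately have lower: "\<mu> / 2 * (normM M (y - x + w))\<^sup>2 \<le> bregman f g (y + w) x"
    by (simp only: normM_uminus)
  have "bregman f g (y + w) y \<le> L / 2 * (normM M (y - (y + w)))\<^sup>2"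
    using assms unfolding S11_def by blast
  then have upper: "bregman f g (y + w) y \<le> L / 2 * (normM M w)\<^sup>2"
    by (simp add: normM_uminus)
  have "(g y - g x) \<bullet> w = bregman f g (y + w) x - bregman f g (y + w) y - bregman f g y x"
    using bregman_three_point[of f g "y + w" x y] by simp
  with lower upper show ?thesis
    by linarith
qed

lemma S11_gradient_inner_lower_bound_symmetric:
  assumes "S11 M \<mu> L f g"
  shows "(g u1 - g u2) \<bullet> w
    \<ge> \<mu> / 2 * (normM M (u1 - u2 + w))\<^sup>2 - L / 2 * (normM M w)\<^sup>2
      - 1 / 2 * ((g u1 - g u2) \<bullet> (u1 - u2))"
proof -
  have forward: "(g u1 - g u2) \<bullet> w
      \<ge> \<mu> / 2 * (normM M (u1 - u2 + w))\<^sup>2 - L / 2 * (normM M w)\<^sup>2 - bregman f g u1 u2"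
    using S11_gradient_inner_lower_bound[OF assms] .
  have "(g u2 - g u1) \<bullet> (- w)
      \<ge> \<mu> / 2 * (normM M (u2 - u1 + - w))\<^sup>2 - L / 2 * (normM M (- w))\<^sup>2 - bregman f g u2 u1"
    using S11_gradient_inner_lower_bound[OF assms] .
  moreover have "(g u2 - g u1) \<bullet> (- w) = (g u1 - g u2) \<bullet> w"
    by (simp add: inner_diff_left)
  moreover have "u2 - u1 + - w = - (u1 - u2 + w)"
    by simp
  ultimately have backward: "(g u1 - g u2) \<bullet> w
      \<ge> \<mu> / 2 * (normM M (u1 - u2 + w))\<^sup>2 - L / 2 * (normM M w)\<^sup>2 - bregman f g u2 u1"
    by (simp only: normM_uminus)
  show ?thesis
    using forward backward bregman_symmetrized[of f g u1 u2] by linarith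
qed

theorem lemma3p1:
  fixes B :: "real^'m^'n" and IV :: "real^'m^'m"
    and f :: "real^'m \<Rightarrow> real" and gradf :: "real^'m \<Rightarrow> real^'m"
    and \<mu> L :: real and u1 u2 :: "real^'m" and p1 p2 :: "real^'n"
  assumes "spd IV"
    and "S11 IV \<mu> L f gradf"
  shows "let v1 = u1 + matrix_inv IV *v (transpose B *v p1);
             v2 = u2 + matrix_inv IV *v (transpose B *v p2)
         in (gradf u1 - gradf u2) \<bullet> (matrix_inv IV *v (transpose B *v (p1 - p2)))
            \<ge> \<mu> / 2 * (normM IV (v1 - v2))\<^sup>2
              - L / 2 * (normM (matrix_inv IV) (transpose B *v (p1 - p2)))\<^sup>2
              - 1 / 2 * ((gradf u1 - gradf u2) \<bullet> (u1 - u2))"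
proof -
  define w where "w = matrix_inv IV *v (transpose B *v (p1 - p2))"
  have v_diff: "(u1 + matrix_inv IV *v (transpose B *v p1))
      - (u2 + matrix_inv IV *v (transpose B *v p2)) = u1 - u2 + w"
    unfolding w_def by (simp add: algebra_simps)
  have "normM (matrix_inv IV) (transpose B *v (p1 - p2)) = normM IV w"
    unfolding w_def using normM_matrix_inv[OF spd_invertible[OF assms(1)]] .
  then show ?thesis
    using S11_gradient_inner_lower_bound_symmetric[OF assms(2), of u1 u2 w]
    unfolding Let_def v_diff w_def by simp
qed

end
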